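(* Let $A=\{a_n\}_{n\in\mathbb Z}\subset\mathbb R$ be an almost periodic set with $0\notin A$, enumerated so that $a_n\le a_{n+1}$ for all $n$. Then the finite limit $$\alpha_0=\lim_{N\to\infty}\sum_{|a_n|<N}\frac1{a_n}$$ exists, and for every $z\in\mathbb C\setminus A$ the series $$\alpha_z=\frac1{z-a_0}+\sum_{n=1}^\infty\left[\frac1{z-a_n}+\frac1{z-a_{-n}}\right]$$ converges absolutely.
   Context: A discrete locally finite multiset $A=\{a_n\}_{n\in\mathbb Z}\subset\mathbb R$ (a point may occur several times in the sequence) is called almost periodic if for every $\varepsilon>0$ the set $$E_\varepsilon=\{\tau\in\mathbb R:\ \exists\text{ a bijection }\sigma:\mathbb Z\to\mathbb Z\text{ with }\sup_n|a_n+\tau-a_{\sigma(n)}|<\varepsilon\}$$ is relatively dense, i.e. there is $L_\varepsilon>0$ with $E_\varepsilon\cap(x,x+L_\varepsilon)\ne\emptyset$ for every $x\in\mathbb R$. *)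

theory Defs
  imports "HOL-Analysis.Analysis"
begin

text \<open>A multiset of reals is given as a sequence a :: int => real (repetitions allowed).
  Discrete locally finite: every bounded interval contains a_n for only finitely many n.\<close>
definition locally_finite_seq :: "(int \<Rightarrow> real) \<Rightarrow> bool" where
  "locally_finite_seq a \<longleftrightarrow> (\<forall>R. finite {n. \<bar>a n\<bar> \<le> R})"

definition almost_period_set :: "(int \<Rightarrow> real) \<Rightarrow> real \<Rightarrow> real set" where
  "almost_period_set a \<epsilon> = {\<tau>. \<exists>\<sigma>::int \<Rightarrow> int. bij \<sigma> \<and>
      (\<exists>\<delta><\<epsilon>. \<forall>n. \<bar>a n + \<tau> - a (\<sigma> n)\<bar> \<le> \<delta>)}"

definition relatively_dense :: "real set \<Rightarrow> bool" where
  "relatively_dense E \<longleftrightarrow> (\<exists>L>0. \<forall>x. E \<inter> {x<..<x+L} \<noteq> {})"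

definition almost_periodic_set :: "(int \<Rightarrow> real) \<Rightarrow> bool" where
  "almost_periodic_set a \<longleftrightarrow> locally_finite_seq a \<and>
     (\<forall>\<epsilon>>0. relatively_dense (almost_period_set a \<epsilon>))"

end

theory Submission
  imports Defs "HOL-Real_Asymp.Real_Asymp"
begin

(*
  Let n(x, y] be the number of indices n with x < a_n <= y. An almost period tau with
  error < 1 moves the points of (x, y] into (x + tau - 1, y + tau + 1], and almost periods
  exist in every window of a fixed length L; hence every window of length h holds a
  bounded number of points, and n(x, x + t] - n(0, t] is bounded uniformly in x and t.
  For a monotone enumeration the first fact gives linear growth of a_k and -a_(-k), and
  the second, applied to the two halves of [a_(-k), a_k], bounds the midpoints
  (a_k + a_(-k)) / 2. Then
    1/(z - a_k) + 1/(z - a_(-k)) = (2z - a_k - a_(-k)) / ((z - a_k)(z - a_(-k))) = O(1/k^2).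
  The sum over |a_n| < N consists of the pairs n, -n with both points inside, a partial
  sum of the absolutely convergent series at z = 0, and of O(1) unpaired points; these
  satisfy |a_n| >= N - B with B a bound for |a_k + a_(-k)|, so they contribute O(1/N).
*)

lemma almost_period_set_uminus:
  assumes "\<tau> \<in> almost_period_set a \<epsilon>"
  shows "- \<tau> \<in> almost_period_set a \<epsilon>"
proof -
  obtain \<sigma> \<delta> where \<sigma>: "bij \<sigma>" "\<delta> < \<epsilon>" "\<forall>n. \<bar>a n + \<tau> - a (\<sigma> n)\<bar> \<le> \<delta>"
    using assms unfolding almost_period_set_def by blast
  have "\<bar>a n + - \<tau> - a (inv \<sigma> n)\<bar> \<le> \<delta>" for n
    using \<sigma>(3)[rule_format, of "inv \<sigma> n"] surj_f_inv_f[OF bij_is_surj[OF \<sigma>(1)]]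
    by (simp add: abs_minus_commute)
  then show ?thesis
    unfolding almost_period_set_def using \<sigma>(1,2) bij_imp_bij_inv by fastforce
qed

lemma almost_periodic_set_reflect:
  assumes "almost_periodic_set a"
  shows "almost_periodic_set (\<lambda>n. - a (- n))"
proof -
  have "locally_finite_seq (\<lambda>n. - a (- n))"
  proof -
    have "{n. \<bar>- a (- n)\<bar> \<le> R} = uminus ` {n. \<bar>a n\<bar> \<le> R}" for R
      by (force intro: image_eqI[of _ _ "- _"])
    then show ?thesis
      using assms unfolding almost_periodic_set_def locally_finite_seq_def by simp
  qed
  moreover have period: "- \<tau> \<in> almost_period_set (\<lambda>n. - a (- n)) \<epsilon>"
    if "\<tau> \<in> almost_period_set a \<epsilon>" for \<tau> \<epsilon>
  proof -
    obtain \<sigma> \<delta> where \<sigma>: "bij \<sigma>" "\<delta> < \<epsilon>" "\<forall>n. \<bar>a n + \<tau> - a (\<sigma> n)\<bar> \<le> \<delta>"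
      using \<open>\<tau> \<in> almost_period_set a \<epsilon>\<close> unfolding almost_period_set_def by blast
    have "bij (\<lambda>n. - \<sigma> (- n))"
      using \<sigma>(1) by (rule bij_comp[OF bij_uminus bij_comp[OF _ bij_uminus], unfolded comp_def])
    moreover have "\<bar>- a (- n) + - \<tau> - - a (- (- \<sigma> (- n)))\<bar> \<le> \<delta>" for n
      using \<sigma>(3)[rule_format, of "- n"] by (simp add: abs_minus_commute)
    ultimately show ?thesis
      unfolding almost_period_set_def using \<sigma>(2) by blast
  qed
  moreover have "relatively_dense (almost_period_set (\<lambda>n. - a (- n)) \<epsilon>)" if "\<epsilon> > 0" for \<epsilon>
  proof -
    obtain L where "L > 0" and L: "\<forall>x. almost_period_set a \<epsilon> \<inter> {x<..<x + L} \<noteq> {}"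
      using assms \<open>\<epsilon> > 0\<close> unfolding almost_periodic_set_def relatively_dense_def by blast
    have "almost_period_set (\<lambda>n. - a (- n)) \<epsilon> \<inter> {x<..<x + L} \<noteq> {}" for x
      using L[rule_format, of "- x - L"] period by (fastforce simp: disjoint_iff)
    with \<open>L > 0\<close> show ?thesis unfolding relatively_dense_def by blast
  qed
  ultimately show ?thesis unfolding almost_periodic_set_def by blast
qed

locale almost_periodic_seq =
  fixes a :: "int \<Rightarrow> real"
  assumes almost_periodic: "almost_periodic_set a"
begin

lemma finite_abs_le: "finite {n. \<bar>a n\<bar> \<le> R}"
  using almost_periodic unfolding almost_periodic_set_def locally_finite_seq_def by blast

lemma finite_points_between: "finite {n. x < a n \<and> a n \<le> y}"
  by (rule finite_subset[OF _ finite_abs_le[of "max \<bar>x\<bar> \<bar>y\<bar>"]]) auto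

definition npoints :: "real \<Rightarrow> real \<Rightarrow> nat" where
  "npoints x y = card {n. x < a n \<and> a n \<le> y}"

lemma card_le_npoints: "S \<subseteq> {n. x < a n \<and> a n \<le> y} \<Longrightarrow> card S \<le> npoints x y"
  unfolding npoints_def by (rule card_mono[OF finite_points_between])

lemma npoints_mono: "x' \<le> x \<Longrightarrow> y \<le> y' \<Longrightarrow> npoints x y \<le> npoints x' y'"
  unfolding npoints_def[of x y] by (rule card_le_npoints) auto

lemma npoints_split:
  assumes "x \<le> y" "y \<le> z"
  shows "npoints x z = npoints x y + npoints y z"
proof -
  have "{n. x < a n \<and> a n \<le> z} = {n. x < a n \<and> a n \<le> y} \<union> {n. y < a n \<and> a n \<le> z}"
    using assms by auto
  then show ?thesis
    unfolding npoints_def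
    by (simp add: card_Un_disjoint[OF finite_points_between finite_points_between] disjoint_iff)
qed

lemma npoints_almost_period:
  assumes "\<tau> \<in> almost_period_set a \<epsilon>"
  shows "npoints x y \<le> npoints (x + \<tau> - \<epsilon>) (y + \<tau> + \<epsilon>)"
proof -
  obtain \<sigma> \<delta> where \<sigma>: "bij \<sigma>" "\<delta> < \<epsilon>" "\<forall>n. \<bar>a n + \<tau> - a (\<sigma> n)\<bar> \<le> \<delta>"
    using assms unfolding almost_period_set_def by blast
  have "npoints x y = card (\<sigma> ` {n. x < a n \<and> a n \<le> y})"
    unfolding npoints_def using bij_is_inj[OF \<sigma>(1)] by (simp add: card_image inj_on_subset)
  also have "\<dots> \<le> npoints (x + \<tau> - \<epsilon>) (y + \<tau> + \<epsilon>)"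
  proof (rule card_le_npoints, safe)
    fix n assume "x < a n" "a n \<le> y"
    with \<sigma>(2) \<sigma>(3)[rule_format, of n]
    show "x + \<tau> - \<epsilon> < a (\<sigma> n)" "a (\<sigma> n) \<le> y + \<tau> + \<epsilon>"
      by auto
  qed
  finally show ?thesis .
qed

lemma almost_periods_relatively_dense:
  obtains L where "L > 0" "\<And>x. \<exists>\<tau>\<in>almost_period_set a 1. x - L < \<tau> \<and> \<tau> < x"
proof -
  have "relatively_dense (almost_period_set a 1)"
    using almost_periodic unfolding almost_periodic_set_def by simp
  then obtain L where "L > 0" and L: "\<forall>x. almost_period_set a 1 \<inter> {x<..<x + L} \<noteq> {}"
    unfolding relatively_dense_def by blast
  have "\<exists>\<tau>\<in>almost_period_set a 1. x - L < \<tau> \<and> \<tau> < x" for x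
    using L[rule_format, of "x - L"] by (auto simp: disjoint_iff)
  with \<open>L > 0\<close> that show thesis by blast
qed

definition window_bound :: "real \<Rightarrow> nat" where
  "window_bound h = (SUP x. npoints x (x + h))"

lemma npoints_le_window_bound:
  assumes "y - x \<le> h"
  shows "npoints x y \<le> window_bound h"
proof -
  obtain L where "L > 0" and L: "\<And>x. \<exists>\<tau>\<in>almost_period_set a 1. x - L < \<tau> \<and> \<tau> < x"
    using almost_periods_relatively_dense by blast
  have "npoints x (x + h) \<le> card {n. \<bar>a n\<bar> \<le> L + \<bar>h\<bar> + 1}" for x
  proof -
    obtain \<tau> where \<tau>: "\<tau> \<in> almost_period_set a 1" "x - L < \<tau>" "\<tau> < x"
      using L by blast
    have "npoints x (x + h) \<le> npoints (x - \<tau> - 1) (x + h - \<tau> + 1)"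
      using npoints_almost_period[OF almost_period_set_uminus[OF \<tau>(1)]] by simp
    also have "\<dots> \<le> card {n. \<bar>a n\<bar> \<le> L + \<bar>h\<bar> + 1}"
      unfolding npoints_def by (rule card_mono[OF finite_abs_le]) (use \<tau> in auto)
    finally show ?thesis .
  qed
  then have "bdd_above (range (\<lambda>x. npoints x (x + h)))"
    by (rule bdd_aboveI2)
  then show ?thesis
    unfolding window_bound_def
    by (rule cSUP_upper2[OF _ UNIV_I]) (rule npoints_mono, use assms in auto)
qed

lemma npoints_enlarge:
  assumes "x \<le> y" "0 \<le> h"
  shows "npoints (x - h) (y + h) \<le> npoints x y + 2 * window_bound h"
proof -
  have "npoints (x - h) (y + h) = npoints (x - h) x + npoints x y + npoints y (y + h)"
    using assms npoints_split[of "x - h" x "y + h"] npoints_split[of x y "y + h"] by simp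
  moreover have "npoints (x - h) x \<le> window_bound h" "npoints y (y + h) \<le> window_bound h"
    by (simp_all add: npoints_le_window_bound)
  ultimately show ?thesis by linarith
qed

lemma npoints_le_length:
  assumes "x \<le> y"
  shows "real (npoints x y) \<le> (y - x + 1) * window_bound 1"
proof -
  have "npoints x (x + real j) \<le> j * window_bound 1" for j
  proof (induction j)
    case 0
    then show ?case unfolding npoints_def by (auto simp: card_eq_0_iff)
  next
    case (Suc j)
    have "npoints x (x + real (Suc j)) = npoints x (x + real j) + npoints (x + j) (x + j + 1)"
      using npoints_split[of x "x + j" "x + j + 1"] by (simp add: algebra_simps)
    also have "npoints (x + j) (x + j + 1) \<le> window_bound 1"
      by (simp add: npoints_le_window_bound)
    finally show ?case using Suc by simp
  qed
  moreover define j where "j = nat \<lceil>y - x\<rceil>"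
  moreover have "npoints x y \<le> npoints x (x + j)"
    unfolding j_def by (rule npoints_mono) (use real_nat_ceiling_ge[of "y - x"] in auto)
  ultimately have "real (npoints x y) \<le> real j * window_bound 1"
    by (metis le_trans of_nat_le_iff of_nat_mult)
  also have "\<dots> \<le> (y - x + 1) * window_bound 1"
  proof (rule mult_right_mono)
    show "real j \<le> y - x + 1" unfolding j_def using assms by linarith
  qed simp
  finally show ?thesis .
qed

lemma npoints_translate:
  obtains C where "\<And>x t. 0 \<le> t \<Longrightarrow> \<bar>real (npoints x (x + t)) - real (npoints 0 t)\<bar> \<le> C"
proof -
  obtain L where "L > 0" and L: "\<And>x. \<exists>\<tau>\<in>almost_period_set a 1. x - L < \<tau> \<and> \<tau> < x"
    using almost_periods_relatively_dense by blast
  have "\<bar>real (npoints x (x + t)) - real (npoints 0 t)\<bar> \<le> 2 * window_bound 1 + 2 * window_bound L"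
    if "0 \<le> t" for x t
  proof -
    \<comment> \<open>Compare both windows with the window at an almost period \<tau> just left of x.\<close>
    obtain \<tau> where \<tau>: "\<tau> \<in> almost_period_set a 1" "x - L < \<tau>" "\<tau> < x"
      using L by blast
    have "npoints 0 t \<le> npoints (\<tau> - 1) (\<tau> + t + 1)"
      using npoints_almost_period[OF \<tau>(1), of 0 t] by (simp add: add_ac)
    also have "\<dots> \<le> npoints \<tau> (\<tau> + t) + 2 * window_bound 1"
      using npoints_enlarge[of \<tau> "\<tau> + t" 1] \<open>0 \<le> t\<close> by simp
    finally have origin_le: "npoints 0 t \<le> npoints \<tau> (\<tau> + t) + 2 * window_bound 1" .
    have "npoints \<tau> (\<tau> + t) \<le> npoints (0 - 1) (t + 1)"
      using npoints_almost_period[OF almost_period_set_uminus[OF \<tau>(1)], of \<tau> "\<tau> + t"] by simp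
    also have "\<dots> \<le> npoints 0 t + 2 * window_bound 1"
      using npoints_enlarge[of 0 t 1] \<open>0 \<le> t\<close> by simp
    finally have le_origin: "npoints \<tau> (\<tau> + t) \<le> npoints 0 t + 2 * window_bound 1" .
    have "npoints x (x + t) \<le> npoints (\<tau> - L) (\<tau> + t + L)"
      using \<tau> \<open>L > 0\<close> by (intro npoints_mono) auto
    also have "\<dots> \<le> npoints \<tau> (\<tau> + t) + 2 * window_bound L"
      using npoints_enlarge[of \<tau> "\<tau> + t" L] \<open>0 \<le> t\<close> \<open>L > 0\<close> by simp
    finally have x_le: "npoints x (x + t) \<le> npoints \<tau> (\<tau> + t) + 2 * window_bound L" .
    have "npoints \<tau> (\<tau> + t) \<le> npoints (x - L) (x + t + L)"
      using \<tau> by (intro npoints_mono) auto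
    also have "\<dots> \<le> npoints x (x + t) + 2 * window_bound L"
      using npoints_enlarge[of x "x + t" L] \<open>0 \<le> t\<close> \<open>L > 0\<close> by simp
    finally have le_x: "npoints \<tau> (\<tau> + t) \<le> npoints x (x + t) + 2 * window_bound L" .
    show ?thesis using origin_le le_origin x_le le_x by linarith
  qed
  then show thesis by (rule that)
qed

end

locale monotone_almost_periodic_seq = almost_periodic_seq +
  assumes mono_step: "\<And>n. a n \<le> a (n + 1)"
begin

lemma mono: "m \<le> n \<Longrightarrow> a m \<le> a n"
proof (induction n rule: int_ge_induct)
  case (step n)
  then show ?case using mono_step[of n] by linarith
qed simp

lemma reflect: "monotone_almost_periodic_seq (\<lambda>n. - a (- n))"
proof
  show "almost_periodic_set (\<lambda>n. - a (- n))"
    by (rule almost_periodic_set_reflect[OF almost_periodic])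
  show "- a (- n) \<le> - a (- (n + 1))" for n
    using mono[of "- (n + 1)" "- n"] by simp
qed

lemma card_le_npoints_indices:
  assumes "x < a m"
  shows "card {m..n} \<le> npoints x (a n)"
proof (rule card_le_npoints, intro subsetI)
  fix i assume "i \<in> {m..n}"
  then show "i \<in> {i. x < a i \<and> a i \<le> a n}"
    using mono[of m i] mono[of i n] assms by auto
qed

lemma npoints_le_card_indices:
  assumes "y < a n"
  shows "npoints (a m) y \<le> card {m<..<n}"
  unfolding npoints_def
proof (rule card_mono, simp, intro subsetI)
  fix i assume "i \<in> {i. a m < a i \<and> a i \<le> y}"
  then show "i \<in> {m<..<n}"
    using mono[of i m] mono[of n i] assms by force
qed

lemma linear_lower_bound: "\<exists>c>0. \<exists>d. \<forall>k::nat. c * real k - d \<le> a (int k)"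
proof -
  have count: "real k + 1 \<le> (a k - a 0 + 2) * window_bound 1" for k :: nat
  proof -
    have "card {0..int k} \<le> npoints (a 0 - 1) (a k)"
      by (rule card_le_npoints_indices) simp
    also have "real \<dots> \<le> (a k - a 0 + 2) * window_bound 1"
      using npoints_le_length[of "a 0 - 1" "a k"] mono[of 0 k] by (simp add: algebra_simps)
    finally show ?thesis by simp
  qed
  define M where "M = real (window_bound 1)"
  have "M > 0"
    using count[of 0] unfolding M_def by (simp add: zero_less_iff_neq_zero)
  have "1 / M * real k - (2 - a 0) \<le> a k" for k :: nat
  proof -
    have "(real k + 1) / M \<le> a k - a 0 + 2"
      using count[of k] \<open>M > 0\<close> unfolding M_def by (simp add: pos_divide_le_eq)
    moreover have "real k / M \<le> (real k + 1) / M"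
      using \<open>M > 0\<close> by (simp add: divide_right_mono)
    ultimately show ?thesis by simp
  qed
  with \<open>M > 0\<close> show ?thesis
    by (intro exI[of _ "1 / M"] conjI exI[of _ "2 - a 0"]) simp_all
qed

lemma linear_growth:
  "\<exists>c>0. \<exists>d. \<forall>k::nat. c * real k - d \<le> a (int k) \<and> a (- int k) \<le> d - c * real k"
proof -
  interpret reflected: monotone_almost_periodic_seq "\<lambda>n. - a (- n)" by (rule reflect)
  obtain c d where "c > 0" and c: "\<And>k::nat. c * real k - d \<le> a k"
    using linear_lower_bound by blast
  obtain c' d' where "c' > 0" and c': "\<And>k::nat. c' * real k - d' \<le> - a (- k)"
    using reflected.linear_lower_bound by blast
  define e where "e = min c c'"
  define f where "f = max d d'"
  have "e > 0" "d \<le> f" "d' \<le> f"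
    unfolding e_def f_def using \<open>c > 0\<close> \<open>c' > 0\<close> by simp_all
  have "e * real k - f \<le> a k \<and> a (- k) \<le> f - e * real k" for k :: nat
  proof -
    have "e * real k \<le> c * real k" "e * real k \<le> c' * real k"
      unfolding e_def by (simp_all add: mult_right_mono)
    then show ?thesis using c[of k] c'[of k] \<open>d \<le> f\<close> \<open>d' \<le> f\<close> by linarith
  qed
  with \<open>e > 0\<close> show ?thesis by blast
qed

lemma midpoint_lower_bound: "\<exists>m. \<forall>k::nat. m \<le> a k + a (- k)"
proof -
  obtain C where C: "\<And>x t. 0 \<le> t \<Longrightarrow> \<bar>real (npoints x (x + t)) - real (npoints 0 t)\<bar> \<le> C"
    using npoints_translate by blast
  define K where "K = nat \<lceil>2 * C\<rceil>"
  \<comment> \<open>A midpoint c below a (- K) would leave at least k + K + 1 points in (c, c + u]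
    but at most k - K - 1 in (c - u, c], two windows whose counts differ by at most 2 C.\<close>
  have "a (- K) \<le> (a k + a (- k)) / 2" for k :: nat
  proof (rule ccontr)
    define c where "c = (a k + a (- k)) / 2"
    define u where "u = (a k - a (- k)) / 2"
    assume "\<not> a (- K) \<le> (a k + a (- k)) / 2"
    then have "c < a (- K)" unfolding c_def by simp
    have "0 \<le> u" unfolding u_def using mono[of "- k" k] by simp
    have "c + u = a k" "c - u = a (- k)" unfolding c_def u_def by (simp_all add: field_simps)
    have "card {- int K..int k} \<le> npoints c (c + u)"
      unfolding \<open>c + u = a k\<close> using \<open>c < a (- K)\<close> by (rule card_le_npoints_indices)
    then have right: "real k + real K + 1 \<le> npoints c (c + u)"
      by (simp; linarith)
    have "npoints (c - u) c \<le> card {- int k<..<- int K}"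
      unfolding \<open>c - u = a (- k)\<close> using \<open>c < a (- K)\<close> by (rule npoints_le_card_indices)
    then have left: "real (npoints (c - u) c) \<le> max 0 (real k - real K - 1)"
      by (simp; linarith)
    have "\<bar>real (npoints c (c + u)) - real (npoints (c - u) (c - u + u))\<bar> \<le> 2 * C"
      using C[OF \<open>0 \<le> u\<close>, of c] C[OF \<open>0 \<le> u\<close>, of "c - u"] by linarith
    moreover have "2 * C \<le> real K" unfolding K_def by linarith
    ultimately show False using left right by (simp add: abs_le_iff; linarith)
  qed
  then show ?thesis by (intro exI[of _ "2 * a (- K)"]) (simp add: mult.commute)
qed

lemma midpoints_bounded: "\<exists>B. \<forall>n. \<bar>a n + a (- n)\<bar> \<le> B"
proof -
  interpret reflected: monotone_almost_periodic_seq "\<lambda>n. - a (- n)" by (rule reflect)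
  obtain m where m: "\<And>k::nat. m \<le> a k + a (- k)"
    using midpoint_lower_bound by blast
  obtain m' where m': "\<And>k::nat. m' \<le> - a (- k) - a k"
    using reflected.midpoint_lower_bound by auto
  have "\<bar>a n + a (- n)\<bar> \<le> max (- m) (- m')" for n
  proof (cases "n \<ge> 0")
    case True
    then show ?thesis using m[of "nat n"] m'[of "nat n"] by simp
  next
    case False
    then show ?thesis using m[of "nat (- n)"] m'[of "nat (- n)"] by simp
  qed
  then show ?thesis by blast
qed

end

lemma norm_reciprocal_pair_le:
  fixes z :: "'a::real_normed_field"
  assumes "R > 0" and x: "norm z + R \<le> x" and y: "y \<le> - (norm z + R)"
  shows "norm (1 / (z - of_real x) + 1 / (z - of_real y)) \<le> (2 * norm z + \<bar>x + y\<bar>) / R\<^sup>2"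
proof -
  have nx: "R \<le> norm (z - of_real x)"
    using norm_triangle_ineq3[of "of_real x" z] x by (simp add: norm_minus_commute)
  have ny: "R \<le> norm (z - of_real y)"
    using norm_triangle_ineq3[of "of_real y" z] y by (simp add: norm_minus_commute)
  from nx ny have den: "R\<^sup>2 \<le> norm (z - of_real x) * norm (z - of_real y)"
    unfolding power2_eq_square using \<open>R > 0\<close> by (intro mult_mono) auto
  have num: "norm (2 * z - of_real (x + y)) \<le> 2 * norm z + \<bar>x + y\<bar>"
    using norm_triangle_ineq4[of "2 * z" "of_real (x + y)"] by (simp add: norm_mult del: of_real_add)
  have "z - of_real x \<noteq> 0" "z - of_real y \<noteq> 0"
    using nx ny \<open>R > 0\<close> by auto
  then have "1 / (z - of_real x) + 1 / (z - of_real y)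
      = (2 * z - of_real (x + y)) / ((z - of_real x) * (z - of_real y))"
    by (simp add: field_simps)
  also have "norm \<dots> \<le> (2 * norm z + \<bar>x + y\<bar>) / R\<^sup>2"
    unfolding norm_divide norm_mult using num den \<open>R > 0\<close>
    by (intro frac_le) auto
  finally show ?thesis .
qed

lemma summable_norm_reciprocal_pairs:
  fixes z :: "'a::real_normed_field" and x y :: "nat \<Rightarrow> real"
  assumes "c > 0" and B: "\<And>k. \<bar>x k + y k\<bar> \<le> B"
    and x: "\<And>k. c * real k - d \<le> x k" and y: "\<And>k. y k \<le> d - c * real k"
  shows "summable (\<lambda>k. norm (1 / (z - of_real (x k)) + 1 / (z - of_real (y k))))"
proof (rule summable_comparison_test_ev)
  show "summable (\<lambda>k. 4 * (2 * norm z + B) / c\<^sup>2 * inverse (real k ^ 2))"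
    by (intro summable_mult inverse_power_summable) simp
  have bound: "norm (norm (1 / (z - of_real (x k)) + 1 / (z - of_real (y k))))
      \<le> 4 * (2 * norm z + B) / c\<^sup>2 * inverse (real k ^ 2)"
    if k: "real k \<ge> 2 * (\<bar>d\<bar> + norm z) / c + 1" for k
  proof -
    define R where "R = c * real k / 2"
    have "2 * (\<bar>d\<bar> + norm z) / c \<le> real k - 1"
      using k by simp
    then have "2 * (\<bar>d\<bar> + norm z) \<le> c * (real k - 1)"
      using \<open>c > 0\<close> by (simp only: pos_divide_le_eq mult.commute)
    then have "2 * (\<bar>d\<bar> + norm z) + c \<le> c * real k"
      by (simp add: algebra_simps)
    then have "R > 0" and "d + norm z \<le> R"
      using R_def \<open>c > 0\<close> norm_ge_zero[of z] abs_ge_self[of d] by (simp_all, linarith)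
    then have "norm (1 / (z - of_real (x k)) + 1 / (z - of_real (y k)))
        \<le> (2 * norm z + \<bar>x k + y k\<bar>) / R\<^sup>2"
      using x[of k] y[of k] unfolding R_def by (intro norm_reciprocal_pair_le) auto
    also have "\<dots> \<le> (2 * norm z + B) / R\<^sup>2"
      using B[of k] \<open>R > 0\<close> by (intro divide_right_mono) auto
    also have "\<dots> = 4 * (2 * norm z + B) / c\<^sup>2 * inverse (real k ^ 2)"
      unfolding R_def by (simp add: field_simps power2_eq_square)
    finally show ?thesis by simp
  qed
  define k0 where "k0 = nat \<lceil>2 * (\<bar>d\<bar> + norm z) / c + 1\<rceil>"
  show "eventually (\<lambda>k. norm (norm (1 / (z - of_real (x k)) + 1 / (z - of_real (y k))))
      \<le> 4 * (2 * norm z + B) / c\<^sup>2 * inverse (real k ^ 2)) sequentially"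
    using eventually_ge_at_top[of k0]
  proof (rule eventually_mono)
    fix k assume "k0 \<le> k"
    have "2 * (\<bar>d\<bar> + norm z) / c + 1 \<le> real k0"
      unfolding k0_def by (rule real_nat_ceiling_ge)
    also have "\<dots> \<le> real k"
      using \<open>k0 \<le> k\<close> by (rule of_nat_mono)
    finally show "norm (norm (1 / (z - of_real (x k)) + 1 / (z - of_real (y k))))
      \<le> 4 * (2 * norm z + B) / c\<^sup>2 * inverse (real k ^ 2)"
      by (rule bound)
  qed
qed

lemma sum_symmetric_int_set:
  fixes f :: "int \<Rightarrow> 'a::comm_monoid_add"
  assumes "finite S" and symm: "\<And>n. n \<in> S \<Longrightarrow> - n \<in> S"
  shows "sum f S = (if 0 \<in> S then f 0 else 0)
    + (\<Sum>k | int (Suc k) \<in> S. f (int (Suc k)) + f (- int (Suc k)))"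
proof -
  define K where "K = {k. int (Suc k) \<in> S}"
  have S: "S = (S \<inter> {0}) \<union> ((\<lambda>k. int (Suc k)) ` K \<union> (\<lambda>k. - int (Suc k)) ` K)"
  proof (intro equalityI subsetI)
    fix n assume "n \<in> S"
    consider "n = 0" | "n > 0" | "n < 0" by linarith
    then show "n \<in> (S \<inter> {0}) \<union> ((\<lambda>k. int (Suc k)) ` K \<union> (\<lambda>k. - int (Suc k)) ` K)"
    proof cases
      case 2
      then have "n = int (Suc (nat n - 1))" by simp
      with \<open>n \<in> S\<close> show ?thesis
        unfolding K_def by (metis (mono_tags) UnI1 UnI2 image_eqI mem_Collect_eq)
    next
      case 3
      then have "n = - int (Suc (nat (- n) - 1))" by simp
      with symm[OF \<open>n \<in> S\<close>] show ?thesis unfolding K_def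
        by (metis (mono_tags) UnI2 image_eqI mem_Collect_eq minus_minus)
    qed (use \<open>n \<in> S\<close> in simp)
  qed (auto simp: K_def dest: symm)
  have "finite K"
    unfolding K_def by (rule finite_vimageI[OF \<open>finite S\<close>, unfolded vimage_def]) (simp add: inj_def)
  let ?P = "(\<lambda>k. int (Suc k)) ` K" and ?N = "(\<lambda>k. - int (Suc k)) ` K"
  have "sum f S = sum f (S \<inter> {0} \<union> (?P \<union> ?N))"
    using S by (rule arg_cong)
  also have "\<dots> = sum f (S \<inter> {0}) + sum f (?P \<union> ?N)"
    by (rule sum.union_disjoint) (auto simp: \<open>finite K\<close>)
  also have "sum f (?P \<union> ?N) = sum f ?P + sum f ?N"
    by (rule sum.union_disjoint) (auto simp: \<open>finite K\<close>)
  also have "sum f (S \<inter> {0}) + (sum f ?P + sum f ?N)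
      = (if 0 \<in> S then f 0 else 0) + (\<Sum>k\<in>K. f (int (Suc k)) + f (- int (Suc k)))"
    by (simp add: sum.reindex inj_on_def sum.distrib)
  finally show ?thesis unfolding K_def .
qed

context almost_periodic_seq
begin

lemma filterlim_paired_indices:
  "filterlim (\<lambda>N. {k. \<bar>a (int (Suc k))\<bar> < N \<and> \<bar>a (- int (Suc k))\<bar> < N})
     (finite_subsets_at_top UNIV) at_top"
  unfolding filterlim_finite_subsets_at_top
proof (intro allI impI)
  define K where "K N = {k. \<bar>a (int (Suc k))\<bar> < N \<and> \<bar>a (- int (Suc k))\<bar> < N}" for N
  fix X :: "nat set" assume "finite X \<and> X \<subseteq> UNIV"
  have "eventually (\<lambda>N. k \<in> K N) at_top" for k
    using eventually_gt_at_top[of "max \<bar>a (int (Suc k))\<bar> \<bar>a (- int (Suc k))\<bar>"]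
    by (rule eventually_mono) (simp add: K_def)
  with \<open>finite X \<and> X \<subseteq> UNIV\<close> have "eventually (\<lambda>N. X \<subseteq> K N) at_top"
    by (simp add: subset_eq eventually_ball_finite)
  moreover have "finite (K N)" for N
    using finite_vimageI[OF finite_abs_le[of N], of "\<lambda>k. int (Suc k)"]
    by (rule finite_subset[rotated]) (auto simp: K_def inj_def)
  ultimately show "eventually (\<lambda>N. finite (K N) \<and> X \<subseteq> K N \<and> K N \<subseteq> UNIV) at_top"
    by simp
qed

lemma sum_reciprocals_unpaired_le:
  assumes B: "\<And>n. \<bar>a n + a (- n)\<bar> \<le> B" and "B < N"
  shows "\<bar>\<Sum>n | \<bar>a n\<bar> < N \<and> N \<le> \<bar>a (- n)\<bar>. 1 / a n\<bar> \<le> 2 * real (window_bound (B + 1)) / (N - B)"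
proof -
  define U where "U = {n. \<bar>a n\<bar> < N \<and> N \<le> \<bar>a (- n)\<bar>}"
  have U: "N - B \<le> \<bar>a n\<bar> \<and> \<bar>a n\<bar> < N" if "n \<in> U" for n
  proof -
    have "\<bar>a (- n)\<bar> \<le> \<bar>a n + a (- n)\<bar> + \<bar>a n\<bar>"
      using abs_triangle_ineq[of "a n + a (- n)" "- a n"] by simp
    with that B[of n] show ?thesis unfolding U_def by simp
  qed
  have "U \<subseteq> {n. N - B - 1 < a n \<and> a n \<le> N} \<union> {n. - N - 1 < a n \<and> a n \<le> - N + B}"
  proof
    fix n assume "n \<in> U"
    with U[of n] show "n \<in> {n. N - B - 1 < a n \<and> a n \<le> N} \<union> {n. - N - 1 < a n \<and> a n \<le> - N + B}"
      by (cases "0 \<le> a n") auto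
  qed
  then have "card U \<le> card ({n. N - B - 1 < a n \<and> a n \<le> N} \<union> {n. - N - 1 < a n \<and> a n \<le> - N + B})"
    by (rule card_mono[rotated]) (simp add: finite_points_between)
  also have "\<dots> \<le> npoints (N - B - 1) N + npoints (- N - 1) (- N + B)"
    unfolding npoints_def by (rule card_Un_le)
  also have "\<dots> \<le> 2 * window_bound (B + 1)"
    using npoints_le_window_bound[of N "N - B - 1" "B + 1"]
      npoints_le_window_bound[of "- N + B" "- N - 1" "B + 1"] by simp
  finally have card_U: "real (card U) \<le> 2 * real (window_bound (B + 1))"
    by linarith
  have "\<bar>\<Sum>n\<in>U. 1 / a n\<bar> \<le> (\<Sum>n\<in>U. \<bar>1 / a n\<bar>)"
    by (rule sum_abs)
  also have "\<dots> \<le> card U * (1 / (N - B))"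
  proof (rule sum_bounded_above)
    fix n assume "n \<in> U"
    then show "\<bar>1 / a n\<bar> \<le> 1 / (N - B)"
      using U[of n] \<open>B < N\<close> by (simp add: frac_le)
  qed
  also have "\<dots> \<le> 2 * real (window_bound (B + 1)) / (N - B)"
    using card_U \<open>B < N\<close> by (simp add: divide_right_mono)
  finally show ?thesis unfolding U_def .
qed

end

context monotone_almost_periodic_seq
begin

lemma summable_norm_reciprocal_pairs_seq:
  fixes z :: "'a::real_normed_field"
  shows "summable (\<lambda>k. norm (1 / (z - of_real (a (int (Suc k))))
    + 1 / (z - of_real (a (- int (Suc k))))))"
proof -
  obtain c d where "c > 0"
    and growth: "\<And>k::nat. c * real k - d \<le> a k \<and> a (- k) \<le> d - c * real k"
    using linear_growth by blast
  obtain B where B: "\<And>n. \<bar>a n + a (- n)\<bar> \<le> B"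
    using midpoints_bounded by blast
  show ?thesis
  proof (rule summable_norm_reciprocal_pairs[OF \<open>c > 0\<close>])
    show "\<bar>a (int (Suc k)) + a (- int (Suc k))\<bar> \<le> B" for k
      by (rule B)
    show "c * real k - (d - c) \<le> a (int (Suc k))" "a (- int (Suc k)) \<le> d - c - c * real k" for k
      using growth[of "Suc k"] by (simp_all add: algebra_simps)
  qed
qed

lemma tendsto_sum_reciprocals_paired:
  "((\<lambda>N. \<Sum>n | \<bar>a n\<bar> < N \<and> \<bar>a (- n)\<bar> < N. 1 / a n)
     \<longlongrightarrow> 1 / a 0 + (\<Sum>k. 1 / a (int (Suc k)) + 1 / a (- int (Suc k)))) at_top"
proof -
  define p where "p k = 1 / a (int (Suc k)) + 1 / a (- int (Suc k))" for k
  define K where "K N = {k. \<bar>a (int (Suc k))\<bar> < N \<and> \<bar>a (- int (Suc k))\<bar> < N}" for N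
  have "\<bar>- x - y\<bar> = \<bar>x + y\<bar>" for x y :: real
    by arith
  then have "summable (\<lambda>k. norm (p k))"
    using summable_norm_reciprocal_pairs_seq[of "0 :: real"] by (simp add: p_def)
  then have "(p has_sum suminf p) UNIV"
    using norm_summable_imp_has_sum summable_sums summable_norm_cancel by blast
  then have "((\<lambda>N. sum p (K N)) \<longlongrightarrow> suminf p) at_top"
    unfolding has_sum_def K_def by (rule filterlim_compose[OF _ filterlim_paired_indices])
  then have "((\<lambda>N. 1 / a 0 + sum p (K N)) \<longlongrightarrow> 1 / a 0 + suminf p) at_top"
    by (intro tendsto_add tendsto_const)
  moreover have "eventually (\<lambda>N. 1 / a 0 + sum p (K N)
      = (\<Sum>n | \<bar>a n\<bar> < N \<and> \<bar>a (- n)\<bar> < N. 1 / a n)) at_top"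
    using eventually_gt_at_top[of "\<bar>a 0\<bar>"]
  proof (rule eventually_mono)
    fix N assume "\<bar>a 0\<bar> < N"
    have "finite {n. \<bar>a n\<bar> < N \<and> \<bar>a (- n)\<bar> < N}"
      by (rule finite_subset[OF _ finite_abs_le[of N]]) auto
    then show "1 / a 0 + sum p (K N) = (\<Sum>n | \<bar>a n\<bar> < N \<and> \<bar>a (- n)\<bar> < N. 1 / a n)"
      using \<open>\<bar>a 0\<bar> < N\<close> by (subst sum_symmetric_int_set) (auto simp: p_def K_def)
  qed
  ultimately show ?thesis unfolding p_def by (rule Lim_transform_eventually)
qed

lemma tendsto_sum_reciprocals_unpaired:
  "((\<lambda>N. \<Sum>n | \<bar>a n\<bar> < N \<and> N \<le> \<bar>a (- n)\<bar>. 1 / a n) \<longlongrightarrow> 0) at_top"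
proof -
  obtain B where B: "\<And>n. \<bar>a n + a (- n)\<bar> \<le> B"
    using midpoints_bounded by blast
  have "((\<lambda>N. W / (N - B)) \<longlongrightarrow> 0) at_top" for W :: real
    by real_asymp
  moreover have "eventually (\<lambda>N. norm (\<Sum>n | \<bar>a n\<bar> < N \<and> N \<le> \<bar>a (- n)\<bar>. 1 / a n)
      \<le> 2 * real (window_bound (B + 1)) / (N - B)) at_top"
    using eventually_gt_at_top[of B]
    by (rule eventually_mono) (simp add: sum_reciprocals_unpaired_le[OF B])
  ultimately show ?thesis
    by (rule Lim_null_comparison[rotated])
qed

lemma tendsto_sum_reciprocals:
  "((\<lambda>N. \<Sum>n | \<bar>a n\<bar> < N. 1 / a n)
     \<longlongrightarrow> 1 / a 0 + (\<Sum>k. 1 / a (int (Suc k)) + 1 / a (- int (Suc k)))) at_top"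
proof -
  have split: "(\<Sum>n | \<bar>a n\<bar> < N. 1 / a n)
      = (\<Sum>n | \<bar>a n\<bar> < N \<and> \<bar>a (- n)\<bar> < N. 1 / a n)
      + (\<Sum>n | \<bar>a n\<bar> < N \<and> N \<le> \<bar>a (- n)\<bar>. 1 / a n)" for N
  proof -
    have parts: "{n. \<bar>a n\<bar> < N}
        = {n. \<bar>a n\<bar> < N \<and> \<bar>a (- n)\<bar> < N} \<union> {n. \<bar>a n\<bar> < N \<and> N \<le> \<bar>a (- n)\<bar>}"
      by auto
    have "finite {n. \<bar>a n\<bar> < N \<and> P n}" for P
      by (rule finite_subset[OF _ finite_abs_le[of N]]) auto
    then show ?thesis
      unfolding parts by (intro sum.union_disjoint) auto
  qed
  show ?thesis
    using tendsto_add[OF tendsto_sum_reciprocals_paired tendsto_sum_reciprocals_unpaired]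
    unfolding split by simp
qed

end

theorem corollary1:
  fixes a :: "int \<Rightarrow> real"
  assumes "almost_periodic_set a"
    and "\<forall>n. a n \<noteq> 0"
    and "\<forall>n. a n \<le> a (n + 1)"
  shows "(\<exists>l::real. ((\<lambda>N::real. \<Sum>n\<in>{n. \<bar>a n\<bar> < N}. 1 / a n) \<longlongrightarrow> l) at_top)
    \<and> (\<forall>z::complex. (\<forall>n. z \<noteq> complex_of_real (a n)) \<longrightarrow>
         summable (\<lambda>k::nat. norm (1 / (z - complex_of_real (a (int (Suc k))))
                                 + 1 / (z - complex_of_real (a (- int (Suc k)))))))"
proof -
  interpret monotone_almost_periodic_seq a
    by unfold_locales (use assms(1,3) in auto)
  show ?thesis
    using tendsto_sum_reciprocals summable_norm_reciprocal_pairs_seq by blast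
qed

end
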